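(* Let $p\ge 3$ be an odd integer, $\mu\ge 0$ and $\alpha>0$. Then for any initial data $(x_0,x_1)\in\mathbb{R}^2$ there exists a unique global solution $x\in C^2([0,\infty))$ of the initial value problem \[ x''(t)+\mu x'(t)+\alpha x(t)^p=0,\quad t>0,\qquad x(0)=x_0,\ x'(0)=x_1. \] Moreover, if $\mu>0$, there exists a constant $C_*>0$ such that this solution satisfies \[ |x(t)|\le C_*\, t^{-\frac{1}{p-1}}\quad\text{for all } t>0. \] *)

theory Defs
  imports "HOL-Analysis.Analysis"
begin

definition C2_nonneg_with :: "(real \<Rightarrow> real) \<Rightarrow> (real \<Rightarrow> real) \<Rightarrow> (real \<Rightarrow> real) \<Rightarrow> bool" where
  "C2_nonneg_with x x' x'' \<longleftrightarrow>
     (\<forall>t\<ge>0. (x has_real_derivative x' t) (at t within {0..}) \<and>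
            (x' has_real_derivative x'' t) (at t within {0..})) \<and>
     continuous_on {0..} x''"

definition ivp_solution :: "real \<Rightarrow> real \<Rightarrow> nat \<Rightarrow> real \<Rightarrow> real \<Rightarrow> (real \<Rightarrow> real) \<Rightarrow> bool" where
  "ivp_solution mu alpha p x0 x1 x \<longleftrightarrow>
     (\<exists>x' x''. C2_nonneg_with x x' x'' \<and>
        (\<forall>t>0. x'' t + mu * x' t + alpha * (x t) ^ p = 0) \<and>
        x 0 = x0 \<and> x' 0 = x1)"

end

theory Submission
  imports Defs
begin

text \<open>Existence: truncating the nonlinearity at level \<open>R\<close> gives a globally Lipschitz system,
  solved by Picard iteration. The energy \<open>E = x'^2/2 + \<alpha> x^(p+1)/(p+1)\<close> is nonincreasing
  along solutions, so for \<open>R\<close> large in terms of the initial energy the truncated solution never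
  reaches the cut-off and solves the original equation. Uniqueness follows from a Gronwall
  argument for the squared distance of two solutions in phase space, using that \<open>x^p\<close> is
  Lipschitz on the bounded range of both solutions.

  Decay: for \<open>\<mu> > 0\<close> the perturbed energy \<open>H = E + \<delta> x^p x'\<close> with small \<open>\<delta> > 0\<close> is comparable
  to \<open>E\<close> and satisfies \<open>H' \<le> -m (x'^2 + x^(2p))\<close>. Since \<open>H^(1+\<theta>) \<lesssim> x'^2 + x^(2p)\<close> with
  \<open>\<theta> = (p-1)/(p+1)\<close>, this gives \<open>H' \<le> -\<kappa> H^(1+\<theta>)\<close>, hence \<open>H(t) \<lesssim> t^(-1/\<theta>)\<close>, and
  \<open>|x|^(p+1) \<lesssim> H\<close> yields \<open>|x(t)| \<lesssim> t^(-1/(p-1))\<close>.\<close>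

section \<open>Global solutions of Lipschitz autonomous systems\<close>

primrec picard_iter :: "('a::banach \<Rightarrow> 'a) \<Rightarrow> 'a \<Rightarrow> nat \<Rightarrow> real \<Rightarrow> 'a" where
  "picard_iter F y0 0 = (\<lambda>t. y0)"
| "picard_iter F y0 (Suc n) = (\<lambda>t. y0 + integral {0..t} (\<lambda>s. F (picard_iter F y0 n s)))"

definition picard_limit :: "('a::banach \<Rightarrow> 'a) \<Rightarrow> 'a \<Rightarrow> real \<Rightarrow> 'a" where
  "picard_limit F y0 t = y0 + (\<Sum>i. picard_iter F y0 (Suc i) t - picard_iter F y0 i t)"

lemma integral_exp_affine:
  fixes c :: real
  assumes "0 \<le> t" "0 < c"
  shows "integral {0..t} (\<lambda>s. exp (c * s)) = (exp (c * t) - 1) / c"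
proof -
  have "((\<lambda>s. exp (c * s)) has_integral exp (c * t) / c - exp (c * 0) / c) {0..t}"
  proof (rule fundamental_theorem_of_calculus)
    fix s assume "s \<in> {0..t}"
    have "((\<lambda>s. exp (c * s) / c) has_real_derivative exp (c * s) * c / c) (at s within {0..t})"
      using assms by (intro derivative_eq_intros) auto
    then show "((\<lambda>s. exp (c * s) / c) has_vector_derivative exp (c * s)) (at s within {0..t})"
      using assms by (simp add: has_real_derivative_iff_has_vector_derivative)
  qed (use assms in simp)
  then show ?thesis
    using assms by (simp add: integral_unique diff_divide_distrib)
qed

context
  fixes F :: "'a::banach \<Rightarrow> 'a" and L :: real and y0 :: 'a
  assumes lipschitz: "L-lipschitz_on UNIV F" and L_ge_1: "L \<ge> 1"
begin

lemma continuous_on_lipschitz_field: "continuous_on S F"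
  using lipschitz_on_continuous_on[OF lipschitz_on_subset[OF lipschitz]] by simp

lemma continuous_on_picard_iter: "continuous_on {0..T} (picard_iter F y0 n)"
proof (induction n)
  case (Suc n)
  have "continuous_on {0..T} (\<lambda>s. F (picard_iter F y0 n s))"
    by (rule continuous_on_compose2[OF continuous_on_lipschitz_field Suc]) auto
  then have "continuous_on {0..T} (\<lambda>t. integral {0..t} (\<lambda>s. F (picard_iter F y0 n s)))"
    by (intro indefinite_integral_continuous_1 integrable_continuous_real)
  then show ?case
    by (simp add: continuous_on_add)
qed simp

lemma continuous_on_field_picard_iter: "continuous_on {0..T} (\<lambda>s. F (picard_iter F y0 n s))"
  by (rule continuous_on_compose2[OF continuous_on_lipschitz_field continuous_on_picard_iter]) auto

text \<open>The weight \<open>exp (2 L t)\<close> replaces the usual factorials: integrating it gains a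
  factor \<open>1 / (2 L)\<close>, so each Lipschitz step halves the bound.\<close>
lemma norm_picard_iter_step_le:
  assumes "0 \<le> t"
  shows "norm (picard_iter F y0 (Suc n) t - picard_iter F y0 n t)
           \<le> norm (F y0) * (1/2)^n * exp (2 * L * t)"
  using assms
proof (induction n arbitrary: t)
  case 0
  have "t \<le> exp (2 * L * t)"
    using exp_ge_add_one_self[of "2 * L * t"] mult_right_mono[OF L_ge_1 0] 0 by linarith
  then show ?case
    by (simp add: mult.commute mult_left_mono)
next
  case (Suc n)
  let ?d = "\<lambda>k s. F (picard_iter F y0 (Suc k) s) - F (picard_iter F y0 k s)"
  have int: "(\<lambda>s. F (picard_iter F y0 k s)) integrable_on {0..t}" for k
    by (rule integrable_continuous_real[OF continuous_on_field_picard_iter])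
  have "picard_iter F y0 (Suc (Suc n)) t - picard_iter F y0 (Suc n) t = integral {0..t} (?d n)"
    using Henstock_Kurzweil_Integration.integral_diff[OF int[of "Suc n"] int[of n]]
    by (simp only: picard_iter.simps(2) add_diff_cancel_left)
  also have "norm \<dots> \<le> integral {0..t} (\<lambda>s. L * norm (F y0) * (1/2)^n * exp (2 * L * s))"
  proof (rule Henstock_Kurzweil_Integration.integral_norm_bound_integral)
    show "?d n integrable_on {0..t}"
      by (intro integrable_diff int)
    show "(\<lambda>s. L * norm (F y0) * (1/2)^n * exp (2 * L * s)) integrable_on {0..t}"
      by (intro integrable_continuous_real continuous_intros)
    fix s assume s: "s \<in> {0..t}"
    have "norm (?d n s) \<le> L * norm (picard_iter F y0 (Suc n) s - picard_iter F y0 n s)"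
      by (rule lipschitz_on_normD[OF lipschitz]) auto
    also have "\<dots> \<le> L * (norm (F y0) * (1/2)^n * exp (2 * L * s))"
      using Suc.IH[of s] s L_ge_1 by (intro mult_left_mono) auto
    finally show "norm (?d n s) \<le> L * norm (F y0) * (1/2)^n * exp (2 * L * s)"
      by (simp add: mult_ac)
  qed
  also have "\<dots> = L * norm (F y0) * (1/2)^n * ((exp (2 * L * t) - 1) / (2 * L))"
    using Suc.prems L_ge_1 by (simp add: integral_exp_affine)
  also have "\<dots> \<le> norm (F y0) * (1/2)^(Suc n) * exp (2 * L * t)"
    using L_ge_1 by (simp add: field_simps)
  finally show ?case .
qed

lemma uniform_limit_picard_iter:
  "uniform_limit {0..T} (picard_iter F y0) (picard_limit F y0) sequentially"
proof -
  define D where "D i t = picard_iter F y0 (Suc i) t - picard_iter F y0 i t" for i t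
  have telescope: "picard_iter F y0 n = (\<lambda>t. y0 + (\<Sum>i<n. D i t))" for n
    using sum_lessThan_telescope[of "\<lambda>i. picard_iter F y0 i _" n]
    by (simp add: D_def fun_eq_iff del: picard_iter.simps(2))
  have "uniform_limit {0..T} (\<lambda>n t. \<Sum>i<n. D i t) (\<lambda>t. \<Sum>i. D i t) sequentially"
  proof (rule Weierstrass_m_test)
    fix n t assume t: "t \<in> {0..T}"
    have "norm (D n t) \<le> norm (F y0) * (1/2)^n * exp (2 * L * t)"
      unfolding D_def using t by (intro norm_picard_iter_step_le) auto
    also have "\<dots> \<le> norm (F y0) * (1/2)^n * exp (2 * L * T)"
      using t L_ge_1 by (intro mult_left_mono) auto
    finally show "norm (D n t) \<le> norm (F y0) * exp (2 * L * T) * (1/2)^n"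
      by (simp add: mult_ac)
  qed (intro summable_mult summable_geometric, simp)
  then have "uniform_limit {0..T} (\<lambda>n t. y0 + (\<Sum>i<n. D i t)) (\<lambda>t. y0 + (\<Sum>i. D i t)) sequentially"
    by (intro uniform_limit_add uniform_limit_const)
  moreover have "picard_limit F y0 = (\<lambda>t. y0 + (\<Sum>i. D i t))"
    by (simp add: picard_limit_def D_def fun_eq_iff)
  ultimately show ?thesis
    unfolding telescope by simp
qed

lemma continuous_on_picard_limit: "continuous_on {0..T} (picard_limit F y0)"
  by (rule uniform_limit_theorem[OF _ uniform_limit_picard_iter])
    (auto intro: always_eventually continuous_on_picard_iter)

lemma picard_limit_eq_integral:
  assumes "0 \<le> t"
  shows "picard_limit F y0 t = y0 + integral {0..t} (\<lambda>s. F (picard_limit F y0 s))"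
proof -
  have "uniform_limit {0..t} (\<lambda>n s. F (picard_iter F y0 n s)) (\<lambda>s. F (picard_limit F y0 s)) sequentially"
    by (rule uniform_limit_compose_uniformly_continuous_on[OF uniform_limit_picard_iter
          lipschitz_on_uniformly_continuous[OF lipschitz]]) auto
  from uniform_limit_integral[OF this continuous_on_field_picard_iter]
  obtain I J where I: "\<And>n. ((\<lambda>s. F (picard_iter F y0 n s)) has_integral I n) {0..t}"
    and J: "((\<lambda>s. F (picard_limit F y0 s)) has_integral J) {0..t}" and "I \<longlonglongrightarrow> J"
    by auto
  then have "(\<lambda>n. picard_iter F y0 (Suc n) t) \<longlonglongrightarrow> y0 + J"
    using integral_unique[OF I] by (simp add: tendsto_add)
  moreover have "(\<lambda>n. picard_iter F y0 (Suc n) t) \<longlonglongrightarrow> picard_limit F y0 t"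
    using tendsto_uniform_limitI[OF uniform_limit_picard_iter[of t], of t] assms
    by (intro LIMSEQ_Suc) auto
  ultimately show ?thesis
    using J LIMSEQ_unique integral_unique by blast
qed

lemma picard_limit_solves:
  assumes "0 \<le> t"
  shows "(picard_limit F y0 has_vector_derivative F (picard_limit F y0 t)) (at t within {0..})"
proof -
  have "continuous_on {0..t+1} (\<lambda>s. F (picard_limit F y0 s))"
    by (rule continuous_on_compose2[OF continuous_on_lipschitz_field continuous_on_picard_limit]) auto
  from integral_has_vector_derivative[OF this, of t]
  have "((\<lambda>u. y0 + integral {0..u} (\<lambda>s. F (picard_limit F y0 s))) has_vector_derivative
      F (picard_limit F y0 t)) (at t within {0..t+1})"
    using assms by (intro derivative_eq_intros) auto
  then have "(picard_limit F y0 has_vector_derivative F (picard_limit F y0 t)) (at t within {0..t+1})"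
    by (rule has_vector_derivative_transform[rotated 2]) (use assms picard_limit_eq_integral in auto)
  moreover have "at t within {0..t+1} = at t within {0..}"
    by (rule at_within_nhd[of _ "{..<t+1}"]) (use assms in auto)
  ultimately show ?thesis
    by simp
qed

end

lemma lipschitz_autonomous_ode_solution_exists:
  fixes F :: "'a::banach \<Rightarrow> 'a"
  assumes "L-lipschitz_on UNIV F"
  shows "\<exists>Y. Y 0 = y0 \<and> (\<forall>t\<ge>0. (Y has_vector_derivative F (Y t)) (at t within {0..}))"
proof -
  have lipschitz: "(max L 1)-lipschitz_on UNIV F"
    using lipschitz_on_le[OF assms] by simp
  have "picard_limit F y0 0 = y0"
    using picard_limit_eq_integral[OF lipschitz max.cobounded2, of 0] by simp
  then show ?thesis
    using picard_limit_solves[OF lipschitz max.cobounded2] by blast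
qed

section \<open>Energy\<close>

definition energy :: "real \<Rightarrow> nat \<Rightarrow> real \<Rightarrow> real \<Rightarrow> real" where
  "energy alpha p x v = v^2 / 2 + alpha * x ^ (p + 1) / (real p + 1)"

lemma energy_ge_potential: "alpha * x ^ (p + 1) / (real p + 1) \<le> energy alpha p x v"
  unfolding energy_def by simp

lemma energy_ge_kinetic:
  assumes "odd p" "0 \<le> alpha"
  shows "v^2 \<le> 2 * energy alpha p x v"
  using assms zero_le_even_power[of "p + 1" x] by (simp add: energy_def)

lemma energy_nonneg:
  assumes "odd p" "0 \<le> alpha"
  shows "0 \<le> energy alpha p x v"
  using energy_ge_kinetic[OF assms, of v x] zero_le_power2[of v] by linarith

lemma power_le_energy:
  assumes "0 < alpha"
  shows "x ^ (p + 1) \<le> (real p + 1) * energy alpha p x v / alpha"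
proof -
  have "alpha * x ^ (p + 1) \<le> (real p + 1) * energy alpha p x v"
    using energy_ge_potential[of alpha x p v] by (simp add: divide_le_eq mult.commute)
  then show ?thesis
    using assms by (simp add: le_divide_eq mult.commute)
qed

lemma has_real_derivative_energy:
  assumes "(x has_real_derivative v s) (at s)" "(v has_real_derivative V) (at s)"
  shows "((\<lambda>s. energy alpha p (x s) (v s)) has_real_derivative v s * (V + alpha * x s ^ p)) (at s)"
proof -
  have "((\<lambda>s. energy alpha p (x s) (v s)) has_real_derivative
      2 * v s * V / 2 + alpha * ((real p + 1) * x s ^ p * v s) / (real p + 1)) (at s)"
    unfolding energy_def
    using DERIV_power[OF assms(2), of 2] DERIV_power[OF assms(1), of "p + 1"]
    by (intro DERIV_add DERIV_cdivide DERIV_cmult) (auto simp: mult_ac add.commute)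
  then show ?thesis
    by (rule DERIV_cong) (simp add: field_simps)
qed

lemma energy_antimono:
  fixes x v :: "real \<Rightarrow> real" and p :: nat
  assumes "a \<le> b" "0 \<le> mu"
    and "continuous_on {a..b} x" "continuous_on {a..b} v"
    and "\<And>s. a < s \<Longrightarrow> s < b \<Longrightarrow> (x has_real_derivative v s) (at s)"
    and "\<And>s. a < s \<Longrightarrow> s < b \<Longrightarrow> (v has_real_derivative - mu * v s - alpha * x s ^ p) (at s)"
  shows "energy alpha p (x b) (v b) \<le> energy alpha p (x a) (v a)"
proof (rule DERIV_nonpos_imp_decreasing_open[OF \<open>a \<le> b\<close>])
  fix s assume "a < s" "s < b"
  then have "((\<lambda>s. energy alpha p (x s) (v s)) has_real_derivative - mu * (v s)^2) (at s)"
    by (intro DERIV_cong[OF has_real_derivative_energy[OF assms(5,6)]])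
      (auto simp: power2_eq_square algebra_simps)
  then show "\<exists>D. ((\<lambda>s. energy alpha p (x s) (v s)) has_real_derivative D) (at s) \<and> D \<le> 0"
    using \<open>0 \<le> mu\<close> by auto
next
  show "continuous_on {a..b} (\<lambda>s. energy alpha p (x s) (v s))"
    unfolding energy_def by (intro continuous_intros assms(3,4)) auto
qed


section \<open>Existence\<close>

lemma abs_power_diff_le:
  fixes a b M :: real
  assumes "\<bar>a\<bar> \<le> M" "\<bar>b\<bar> \<le> M"
  shows "\<bar>a ^ n - b ^ n\<bar> \<le> n * M ^ (n - 1) * \<bar>a - b\<bar>"
proof -
  have term_le: "\<bar>b ^ (n - Suc i) * a ^ i\<bar> \<le> M ^ (n - 1)" if "i < n" for i
  proof -
    have "\<bar>b ^ (n - Suc i) * a ^ i\<bar> \<le> M ^ (n - Suc i) * M ^ i"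
      unfolding abs_mult power_abs using assms by (intro mult_mono power_mono) auto
    also have "\<dots> = M ^ (n - 1)"
      using that by (simp add: power_add[symmetric])
    finally show ?thesis .
  qed
  have "\<bar>\<Sum>i<n. b ^ (n - Suc i) * a ^ i\<bar> \<le> (\<Sum>i<n. \<bar>b ^ (n - Suc i) * a ^ i\<bar>)"
    by (rule sum_abs)
  also have "\<dots> \<le> (\<Sum>i<n. M ^ (n - 1))"
    using term_le by (intro sum_mono) auto
  finally have "\<bar>\<Sum>i<n. b ^ (n - Suc i) * a ^ i\<bar> \<le> n * M ^ (n - 1)"
    by simp
  then show ?thesis
    unfolding power_diff_sumr2 abs_mult by (simp add: mult_left_mono mult.commute)
qed

lemma continuous_on_stays_below:
  fixes g :: "real \<Rightarrow> real"
  assumes "0 \<le> t" and "continuous_on {0..t} g"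
    and "\<And>s. 0 \<le> s \<Longrightarrow> s \<le> t \<Longrightarrow> (\<And>u. 0 \<le> u \<Longrightarrow> u < s \<Longrightarrow> g u < R) \<Longrightarrow> g s < R"
  shows "g t < R"
proof (rule ccontr)
  assume "\<not> g t < R"
  define S where "S = {0..t} \<inter> g -` {R..}"
  have "closed S"
    unfolding S_def using assms(2) by (rule continuous_closed_preimage) auto
  moreover have "t \<in> S" "bdd_below S"
    using \<open>\<not> g t < R\<close> assms(1) by (auto simp: S_def)
  ultimately have first_exit: "Inf S \<in> S"
    using closed_contains_Inf by blast
  have "g u < R" if "0 \<le> u" "u < Inf S" for u
    using cInf_lower[OF _ \<open>bdd_below S\<close>, of u] that first_exit by (force simp: S_def)
  then show False
    using assms(3)[of "Inf S"] first_exit by (auto simp: S_def)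
qed

lemma has_real_derivative_at_within_atLeast_interior:
  "(f has_real_derivative D) (at s within {a..}) \<Longrightarrow> a < s \<Longrightarrow> (f has_real_derivative D) (at s)"
  by (subst (asm) at_within_interior) auto

definition truncated_field :: "real \<Rightarrow> real \<Rightarrow> nat \<Rightarrow> real \<Rightarrow> real \<times> real \<Rightarrow> real \<times> real" where
  "truncated_field mu alpha p R y = (snd y, - mu * snd y - alpha * clamp (- R) R (fst y) ^ p)"

lemma abs_clamp_le: "0 \<le> R \<Longrightarrow> \<bar>clamp (- R) R x\<bar> \<le> (R::real)"
  using clamp_in_interval[of "- R" R x] by (simp add: abs_le_iff)

lemma lipschitz_truncated_field:
  fixes mu alpha R :: real
  assumes "0 \<le> mu" "0 \<le> alpha" "0 \<le> R"
  shows "(1 + mu + alpha * p * R ^ (p - 1))-lipschitz_on UNIV (truncated_field mu alpha p R)"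
proof (rule lipschitz_onI)
  fix y z :: "real \<times> real"
  let ?c = "\<lambda>y. clamp (- R) R (fst y)"
  have dx: "\<bar>fst y - fst z\<bar> \<le> dist y z" and dv: "\<bar>snd y - snd z\<bar> \<le> dist y z"
    using dist_fst_le[of y z] dist_snd_le[of y z] by (simp_all add: dist_real_def)
  have "\<bar>?c y ^ p - ?c z ^ p\<bar> \<le> p * R ^ (p - 1) * \<bar>?c y - ?c z\<bar>"
    using assms(3) by (intro abs_power_diff_le abs_clamp_le)
  also have "\<dots> \<le> p * R ^ (p - 1) * dist y z"
    using dist_clamps_le_dist_args[of "- R" R "fst y" "fst z"] dx assms(3)
    by (intro mult_left_mono) (auto simp: dist_real_def)
  finally have "\<bar>alpha * (?c y ^ p - ?c z ^ p)\<bar> \<le> alpha * p * R ^ (p - 1) * dist y z"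
    using assms(2) by (simp add: abs_mult mult_left_mono mult.assoc)
  moreover have "\<bar>mu * (snd y - snd z)\<bar> \<le> mu * dist y z"
    using dv assms(1) by (simp add: abs_mult mult_left_mono)
  ultimately have "\<bar>(- mu * snd y - alpha * ?c y ^ p) - (- mu * snd z - alpha * ?c z ^ p)\<bar>
      \<le> (mu + alpha * p * R ^ (p - 1)) * dist y z"
    by (smt (verit) distrib_right right_diff_distrib)
  moreover have "dist (truncated_field mu alpha p R y) (truncated_field mu alpha p R z)
      \<le> \<bar>snd y - snd z\<bar> + \<bar>(- mu * snd y - alpha * ?c y ^ p) - (- mu * snd z - alpha * ?c z ^ p)\<bar>"
    unfolding truncated_field_def dist_norm by (metis diff_Pair norm_Pair_le real_norm_def)
  ultimately show "dist (truncated_field mu alpha p R y) (truncated_field mu alpha p R z)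
      \<le> (1 + mu + alpha * p * R ^ (p - 1)) * dist y z"
    using dv by (simp add: algebra_simps)
qed (use assms in simp)

lemma truncated_system_solution_exists:
  assumes "0 \<le> mu" "0 \<le> alpha" "0 \<le> R"
  obtains x v where "x 0 = x0" "v 0 = x1"
    and "\<And>t. 0 \<le> t \<Longrightarrow> (x has_real_derivative v t) (at t within {0..})"
    and "\<And>t. 0 \<le> t \<Longrightarrow>
      (v has_real_derivative - mu * v t - alpha * clamp (- R) R (x t) ^ p) (at t within {0..})"
proof -
  obtain Y where Y0: "Y 0 = (x0, x1)"
    and dY: "\<And>t. 0 \<le> t \<Longrightarrow> (Y has_vector_derivative truncated_field mu alpha p R (Y t)) (at t within {0..})"
    using lipschitz_autonomous_ode_solution_exists[OF lipschitz_truncated_field[OF assms]] by blast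
  show ?thesis
  proof (rule that[of "\<lambda>t. fst (Y t)" "\<lambda>t. snd (Y t)"])
    fix t :: real assume "0 \<le> t"
    show "((\<lambda>t. fst (Y t)) has_real_derivative snd (Y t)) (at t within {0..})"
      using bounded_linear.has_vector_derivative[OF bounded_linear_fst dY[OF \<open>0 \<le> t\<close>]]
      by (simp add: truncated_field_def has_real_derivative_iff_has_vector_derivative)
    show "((\<lambda>t. snd (Y t)) has_real_derivative
        - mu * snd (Y t) - alpha * clamp (- R) R (fst (Y t)) ^ p) (at t within {0..})"
      using bounded_linear.has_vector_derivative[OF bounded_linear_snd dY[OF \<open>0 \<le> t\<close>]]
      by (simp add: truncated_field_def has_real_derivative_iff_has_vector_derivative)
  qed (use Y0 in simp_all)
qed

lemma truncated_solution_below_cutoff: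
  fixes x v :: "real \<Rightarrow> real"
  assumes "odd p" "0 \<le> mu" "0 < alpha" "1 \<le> R"
    and "(real p + 1) * energy alpha p (x 0) (v 0) / alpha < R"
    and dx: "\<And>t. 0 \<le> t \<Longrightarrow> (x has_real_derivative v t) (at t within {0..})"
    and dv: "\<And>t. 0 \<le> t \<Longrightarrow>
      (v has_real_derivative - mu * v t - alpha * clamp (- R) R (x t) ^ p) (at t within {0..})"
    and "0 \<le> t"
  shows "\<bar>x t\<bar> < R"
proof (rule continuous_on_stays_below[OF \<open>0 \<le> t\<close>])
  have cont_x: "continuous_on {0..} x" and cont_v: "continuous_on {0..} v"
    using dx dv by (auto intro!: DERIV_continuous_on)
  then show "continuous_on {0..t} (\<lambda>s. \<bar>x s\<bar>)"
    by (intro continuous_intros continuous_on_subset[OF cont_x]) auto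
  fix s assume s: "0 \<le> s" "s \<le> t" and below: "\<And>u. 0 \<le> u \<Longrightarrow> u < s \<Longrightarrow> \<bar>x u\<bar> < R"
  have "energy alpha p (x s) (v s) \<le> energy alpha p (x 0) (v 0)"
  proof (rule energy_antimono[OF s(1) assms(2)])
    fix u assume u: "0 < u" "u < s"
    show "(x has_real_derivative v u) (at u)"
      using has_real_derivative_at_within_atLeast_interior[OF dx u(1)] u(1) by simp
    have "clamp (- R) R (x u) = x u"
      using below[of u] u by (intro clamp_cancel_cbox) auto
    then show "(v has_real_derivative - mu * v u - alpha * x u ^ p) (at u)"
      using has_real_derivative_at_within_atLeast_interior[OF dv u(1)] u(1) by simp
  qed (auto intro: continuous_on_subset[OF cont_x] continuous_on_subset[OF cont_v])
  have "\<bar>x s\<bar> ^ (p + 1) = x s ^ (p + 1)"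
    using assms(1) by (intro power_even_abs) simp
  also have "\<dots> \<le> (real p + 1) * energy alpha p (x s) (v s) / alpha"
    by (rule power_le_energy[OF assms(3)])
  also have "\<dots> \<le> (real p + 1) * energy alpha p (x 0) (v 0) / alpha"
    using \<open>energy alpha p (x s) (v s) \<le> energy alpha p (x 0) (v 0)\<close> assms(3)
    by (intro divide_right_mono mult_left_mono) auto
  also have "\<dots> < R"
    by (rule assms(5))
  also have "R \<le> R ^ (p + 1)"
    using \<open>1 \<le> R\<close> by (intro self_le_power) auto
  finally show "\<bar>x s\<bar> < R"
    using \<open>1 \<le> R\<close> power_less_imp_less_base by fastforce
qed

lemma ivp_solution_exists:
  assumes "odd p" "0 \<le> mu" "0 < alpha"
  shows "\<exists>x. ivp_solution mu alpha p x0 x1 x"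
proof -
  define R where "R = 1 + (real p + 1) * energy alpha p x0 x1 / alpha"
  have "1 \<le> R"
    unfolding R_def using energy_nonneg[OF assms(1), of alpha x0 x1] assms(3) by simp
  then have "0 \<le> R"
    by simp
  obtain x v where initial: "x 0 = x0" "v 0 = x1"
    and dx: "\<And>t. 0 \<le> t \<Longrightarrow> (x has_real_derivative v t) (at t within {0..})"
    and dv: "\<And>t. 0 \<le> t \<Longrightarrow>
      (v has_real_derivative - mu * v t - alpha * clamp (- R) R (x t) ^ p) (at t within {0..})"
    using truncated_system_solution_exists[OF assms(2) less_imp_le[OF assms(3)] \<open>0 \<le> R\<close>] by blast
  have "clamp (- R) R (x t) = x t" if "0 \<le> t" for t
    using truncated_solution_below_cutoff[OF assms \<open>1 \<le> R\<close> _ dx dv that] initial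
    by (intro clamp_cancel_cbox) (auto simp: R_def)
  then have dv': "(v has_real_derivative - mu * v t - alpha * x t ^ p) (at t within {0..})"
    if "0 \<le> t" for t
    using dv[OF that] that by simp
  have "continuous_on {0..} x" "continuous_on {0..} v"
    using dx dv by (auto intro!: DERIV_continuous_on)
  then have "continuous_on {0..} (\<lambda>t. - mu * v t - alpha * x t ^ p)"
    by (intro continuous_intros)
  then have "C2_nonneg_with x v (\<lambda>t. - mu * v t - alpha * x t ^ p)"
    unfolding C2_nonneg_with_def using dx dv' by blast
  then show ?thesis
    unfolding ivp_solution_def using initial
    by (intro exI[of _ x] exI[of _ v] exI[of _ "\<lambda>t. - mu * v t - alpha * x t ^ p"]) simp
qed

section \<open>Uniqueness\<close>

lemma ivp_solutionE:
  assumes "ivp_solution mu alpha p x0 x1 x"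
  obtains v where "x 0 = x0" "v 0 = x1" "continuous_on {0..} x" "continuous_on {0..} v"
    and "\<And>t. 0 < t \<Longrightarrow> (x has_real_derivative v t) (at t)"
    and "\<And>t. 0 < t \<Longrightarrow> (v has_real_derivative - mu * v t - alpha * x t ^ p) (at t)"
proof -
  obtain v x'' where d: "\<And>t. 0 \<le> t \<Longrightarrow> (x has_real_derivative v t) (at t within {0..}) \<and>
      (v has_real_derivative x'' t) (at t within {0..})"
    and eq: "\<And>t. 0 < t \<Longrightarrow> x'' t + mu * v t + alpha * x t ^ p = 0"
    and "x 0 = x0" "v 0 = x1"
    using assms unfolding ivp_solution_def C2_nonneg_with_def by blast
  moreover have "continuous_on {0..} x" "continuous_on {0..} v"
    using d by (auto intro!: DERIV_continuous_on)
  moreover have "(x has_real_derivative v t) (at t)" if "0 < t" for t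
    using d[of t] that by (auto intro: has_real_derivative_at_within_atLeast_interior)
  moreover have "(v has_real_derivative - mu * v t - alpha * x t ^ p) (at t)" if "0 < t" for t
  proof -
    have "x'' t = - mu * v t - alpha * x t ^ p"
      using eq[OF that] by (simp add: algebra_simps)
    then show ?thesis
      using d[of t] that by (auto intro: has_real_derivative_at_within_atLeast_interior)
  qed
  ultimately show ?thesis
    using that by blast
qed

lemma nonpos_of_deriv_le_linear:
  fixes \<Phi> :: "real \<Rightarrow> real"
  assumes "0 \<le> T" "continuous_on {0..T} \<Phi>" "\<Phi> 0 \<le> 0"
    and "\<And>s. 0 < s \<Longrightarrow> s < T \<Longrightarrow> (\<Phi> has_real_derivative \<Phi>' s) (at s)"
    and "\<And>s. 0 < s \<Longrightarrow> s < T \<Longrightarrow> \<Phi>' s \<le> K * \<Phi> s"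
  shows "\<Phi> T \<le> 0"
proof -
  have "exp (- K * T) * \<Phi> T \<le> exp (- K * 0) * \<Phi> 0"
  proof (rule DERIV_nonpos_imp_decreasing_open[OF \<open>0 \<le> T\<close>])
    fix s assume s: "0 < s" "s < T"
    have "((\<lambda>s. exp (- K * s)) has_real_derivative exp (- K * s) * (- K)) (at s)"
      by (intro derivative_eq_intros) auto
    then have "((\<lambda>s. exp (- K * s) * \<Phi> s) has_real_derivative
        exp (- K * s) * (\<Phi>' s - K * \<Phi> s)) (at s)"
      by (rule DERIV_cong[OF DERIV_mult[OF _ assms(4)[OF s]]]) (simp add: algebra_simps)
    moreover have "exp (- K * s) * (\<Phi>' s - K * \<Phi> s) \<le> 0"
      using assms(5)[OF s] by (simp add: mult_nonneg_nonpos)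
    ultimately show "\<exists>D. ((\<lambda>s. exp (- K * s) * \<Phi> s) has_real_derivative D) (at s) \<and> D \<le> 0"
      by blast
  qed (intro continuous_intros assms(2))
  then have "exp (- K * T) * \<Phi> T \<le> 0"
    using assms(3) by simp
  then show ?thesis
    by (simp add: mult_le_0_iff)
qed

lemma damped_difference_estimate:
  fixes u w D c mu alpha :: real
  assumes "0 \<le> mu" "0 \<le> alpha" "0 \<le> c" "\<bar>D\<bar> \<le> c * \<bar>w\<bar>"
  shows "2 * w * u + 2 * u * (- mu * u - alpha * D) \<le> (1 + alpha * c) * (w^2 + u^2)"
proof -
  have "- (u * D) \<le> \<bar>u\<bar> * \<bar>D\<bar>"
    by (metis abs_ge_minus_self abs_mult)
  also have "\<dots> \<le> c * (\<bar>u\<bar> * \<bar>w\<bar>)"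
    using mult_left_mono[OF assms(4), of "\<bar>u\<bar>"] by (simp add: mult.left_commute)
  also have "\<dots> \<le> c * ((w^2 + u^2) / 2)"
    using sum_squares_bound[of "\<bar>u\<bar>" "\<bar>w\<bar>"] assms(3) by (intro mult_left_mono) auto
  finally have "2 * alpha * (- (u * D)) \<le> 2 * alpha * (c * ((w^2 + u^2) / 2))"
    using assms(2) by (intro mult_left_mono) auto
  moreover have "2 * w * u \<le> w^2 + u^2" "0 \<le> mu * u^2"
    using sum_squares_bound[of w u] assms(1) by auto
  ultimately show ?thesis
    by (simp add: algebra_simps power2_eq_square)
qed

lemma ivp_solution_unique:
  assumes "0 \<le> mu" "0 < alpha"
    and "ivp_solution mu alpha p x0 x1 x" "ivp_solution mu alpha p x0 x1 y" and "0 \<le> T"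
  shows "y T = x T"
proof -
  obtain x' where x: "x 0 = x0" "x' 0 = x1" "continuous_on {0..} x" "continuous_on {0..} x'"
    "\<And>t. 0 < t \<Longrightarrow> (x has_real_derivative x' t) (at t)"
    "\<And>t. 0 < t \<Longrightarrow> (x' has_real_derivative - mu * x' t - alpha * x t ^ p) (at t)"
    using ivp_solutionE[OF assms(3)] by blast
  obtain y' where y: "y 0 = x0" "y' 0 = x1" "continuous_on {0..} y" "continuous_on {0..} y'"
    "\<And>t. 0 < t \<Longrightarrow> (y has_real_derivative y' t) (at t)"
    "\<And>t. 0 < t \<Longrightarrow> (y' has_real_derivative - mu * y' t - alpha * y t ^ p) (at t)"
    using ivp_solutionE[OF assms(4)] by blast
  have "bounded (x ` {0..T} \<union> y ` {0..T})"
    by (intro compact_imp_bounded compact_Un compact_continuous_image continuous_on_subset[OF x(3)]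
        continuous_on_subset[OF y(3)]; auto)
  then obtain M where "0 < M" and M: "\<And>s. s \<in> {0..T} \<Longrightarrow> \<bar>x s\<bar> \<le> M \<and> \<bar>y s\<bar> \<le> M"
    unfolding bounded_pos by auto
  define \<Phi> where "\<Phi> s = (y s - x s)^2 + (y' s - x' s)^2" for s
  have "\<Phi> T \<le> 0"
  proof (rule nonpos_of_deriv_le_linear[OF \<open>0 \<le> T\<close>])
    show "continuous_on {0..T} \<Phi>"
      unfolding \<Phi>_def
      by (intro continuous_intros continuous_on_subset[OF x(3)] continuous_on_subset[OF x(4)]
          continuous_on_subset[OF y(3)] continuous_on_subset[OF y(4)]) auto
    show "\<Phi> 0 \<le> 0"
      using x y by (simp add: \<Phi>_def)
    fix s assume s: "0 < s" "s < T"
    show "(\<Phi> has_real_derivative 2 * (y s - x s) * (y' s - x' s) + 2 * (y' s - x' s) *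
        (- mu * (y' s - x' s) - alpha * (y s ^ p - x s ^ p))) (at s)"
      unfolding \<Phi>_def
      by (rule DERIV_cong[OF DERIV_add[OF DERIV_power[OF DERIV_diff[OF y(5) x(5)]]
            DERIV_power[OF DERIV_diff[OF y(6) x(6)]]]]) (use s in \<open>simp_all add: algebra_simps\<close>)
    have "\<bar>y s ^ p - x s ^ p\<bar> \<le> (p * M ^ (p - 1)) * \<bar>y s - x s\<bar>"
      using M[of s] s by (intro abs_power_diff_le) auto
    then show "2 * (y s - x s) * (y' s - x' s) + 2 * (y' s - x' s) *
        (- mu * (y' s - x' s) - alpha * (y s ^ p - x s ^ p)) \<le> (1 + alpha * (p * M ^ (p - 1))) * \<Phi> s"
      unfolding \<Phi>_def using assms(1,2) \<open>0 < M\<close> by (intro damped_difference_estimate) auto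
  qed
  moreover have "0 \<le> (y' T - x' T)^2"
    by simp
  ultimately have "(y T - x T)^2 \<le> 0"
    unfolding \<Phi>_def by linarith
  then show ?thesis
    by simp
qed

section \<open>Decay\<close>

lemma powr_decay_of_deriv_le_pos:
  fixes H H' :: "real \<Rightarrow> real"
  assumes "0 < t" "0 < c" "0 < q"
    and "continuous_on {0..t} H" "\<And>s. 0 \<le> s \<Longrightarrow> s \<le> t \<Longrightarrow> 0 < H s"
    and "\<And>s. 0 < s \<Longrightarrow> s < t \<Longrightarrow> (H has_real_derivative H' s) (at s)"
    and "\<And>s. 0 < s \<Longrightarrow> s < t \<Longrightarrow> H' s \<le> - c * H s powr (1 + 1 / q)"
  shows "H t \<le> (c * t / q) powr (- q)"
proof -
  have "H 0 powr (- 1 / q) - c / q * 0 \<le> H t powr (- 1 / q) - c / q * t"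
  proof (rule DERIV_nonneg_imp_increasing_open[OF less_imp_le[OF \<open>0 < t\<close>]])
    fix s assume s: "0 < s" "s < t"
    have "((\<lambda>s. H s powr (- 1 / q) - c / q * s) has_real_derivative
        - 1 / q * H s powr (- 1 / q - 1) * H' s - c / q) (at s)"
      using assms(5)[of s] s assms(6)[OF s] by (intro derivative_eq_intros) auto
    moreover have "c / q \<le> - 1 / q * H s powr (- 1 / q - 1) * H' s"
    proof -
      have "c / q = 1 / q * H s powr (- 1 / q - 1) * (c * H s powr (1 + 1 / q))"
        using assms(3) assms(5)[of s] s by (simp add: powr_add[symmetric] field_simps)
      also have "\<dots> \<le> 1 / q * H s powr (- 1 / q - 1) * (- H' s)"
        using assms(3) assms(7)[OF s] by (intro mult_left_mono) auto
      finally show ?thesis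
        by simp
    qed
    ultimately show "\<exists>D. ((\<lambda>s. H s powr (- 1 / q) - c / q * s) has_real_derivative D) (at s) \<and> 0 \<le> D"
      by (intro exI conjI) auto
  next
    show "continuous_on {0..t} (\<lambda>s. H s powr (- 1 / q) - c / q * s)"
      using assms(5) by (intro continuous_intros assms(4)) (auto simp: less_imp_neq[symmetric])
  qed
  moreover have "0 \<le> H 0 powr (- 1 / q)"
    by simp
  ultimately have "c / q * t \<le> H t powr (- 1 / q)"
    by linarith
  then have "(H t powr (- 1 / q)) powr (- q) \<le> (c / q * t) powr (- q)"
    using assms(1-3) by (intro powr_mono2') auto
  then show ?thesis
    using assms(1,3,5) by (simp add: powr_powr)
qed

lemma powr_decay_of_deriv_le:
  fixes H H' :: "real \<Rightarrow> real"
  assumes "0 < t" "0 < c" "0 < q"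
    and "continuous_on {0..t} H" "\<And>s. 0 \<le> s \<Longrightarrow> s \<le> t \<Longrightarrow> 0 \<le> H s"
    and "\<And>s. 0 < s \<Longrightarrow> s < t \<Longrightarrow> (H has_real_derivative H' s) (at s)"
    and "\<And>s. 0 < s \<Longrightarrow> s < t \<Longrightarrow> H' s \<le> - c * H s powr (1 + 1 / q)"
  shows "H t \<le> (c * t / q) powr (- q)"
proof (cases "H t = 0")
  case False
  with assms(1,5) have "0 < H t"
    by (simp add: less_le)
  have "0 < H s" if "0 \<le> s" "s \<le> t" for s
  proof -
    have "H t \<le> H s"
    proof (rule DERIV_nonpos_imp_decreasing_open[OF \<open>s \<le> t\<close>])
      fix u assume "s < u" "u < t"
      with that have "0 < u"
        by simp
      have "0 \<le> c * H u powr (1 + 1 / q)"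
        using assms(2) by simp
      then show "\<exists>D. (H has_real_derivative D) (at u) \<and> D \<le> 0"
        using assms(6,7)[OF \<open>0 < u\<close> \<open>u < t\<close>] by force
    qed (use assms(4) that in \<open>auto intro: continuous_on_subset\<close>)
    with \<open>0 < H t\<close> show ?thesis
      by simp
  qed
  then show ?thesis
    using powr_decay_of_deriv_le_pos[OF assms(1-4) _ assms(6,7)] by blast
qed simp

lemma abs_le_of_power_le_powr:
  fixes y A s e :: real
  assumes "0 < n" "0 < s" "0 \<le> A" "\<bar>y\<bar> ^ n \<le> A * s powr (- (real n * e))"
  shows "\<bar>y\<bar> \<le> A powr (1 / n) * s powr (- e)"
proof (cases "y = 0")
  case False
  have "\<bar>y\<bar> = (\<bar>y\<bar> ^ n) powr (1 / n)"
    using False assms(1) by (simp add: powr_realpow[symmetric] powr_powr)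
  also have "\<dots> \<le> (A * s powr (- (real n * e))) powr (1 / n)"
    using assms(4) by (intro powr_mono2) auto
  also have "\<dots> = A powr (1 / n) * s powr (- e)"
    using assms(1-3) by (simp add: powr_mult powr_powr)
  finally show ?thesis .
qed simp

lemma add_powr_le:
  fixes a b r :: real
  assumes "0 \<le> a" "0 \<le> b" "0 \<le> r"
  shows "(a + b) powr r \<le> 2 powr r * (a powr r + b powr r)"
proof -
  have "(a + b) powr r \<le> (2 * max a b) powr r"
    using assms by (intro powr_mono2) auto
  also have "\<dots> = 2 powr r * max a b powr r"
    using assms by (simp add: powr_mult)
  also have "max a b powr r \<le> a powr r + b powr r"
    by (simp add: max_def)
  finally show ?thesis
    by simp
qed

lemma abs_power_Suc_powr:
  fixes y :: real
  assumes "0 < p"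
  shows "(\<bar>y\<bar> ^ (p + 1)) powr (1 + (real p - 1) / (real p + 1)) = (y ^ p)^2"
proof (cases "y = 0")
  case False
  have "real (p + 1) * (1 + (real p - 1) / (real p + 1)) = real (2 * p)"
    by (simp add: field_simps)
  moreover have "\<bar>y\<bar> ^ (p + 1) = \<bar>y\<bar> powr real (p + 1)"
    using False by (intro powr_realpow[symmetric]) simp
  ultimately have "(\<bar>y\<bar> ^ (p + 1)) powr (1 + (real p - 1) / (real p + 1)) = \<bar>y\<bar> powr real (2 * p)"
    by (simp only: powr_powr)
  also have "\<dots> = \<bar>y\<bar> ^ (2 * p)"
    using False by (intro powr_realpow) simp
  finally show ?thesis
    by (simp add: power_even_abs power_mult[symmetric] mult.commute)
qed (use assms in simp)

lemma abs_power_mult_le_energy: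
  fixes x v M alpha :: real
  assumes "odd p" "0 < alpha" "0 \<le> M" "x ^ (p - 1) \<le> M"
  shows "\<bar>x ^ p * v\<bar> \<le> (M * (real p + 1) / (2 * alpha) + 1) * energy alpha p x v"
proof -
  have "2 * \<bar>x ^ p * v\<bar> \<le> (x ^ p)^2 + v^2"
    using sum_squares_bound[of "\<bar>x ^ p\<bar>" "\<bar>v\<bar>"] by (simp add: abs_mult)
  also have "(x ^ p)^2 = x ^ (p - 1) * x ^ (p + 1)"
  proof -
    have "p - 1 + (p + 1) = p * 2"
      using odd_pos[OF assms(1)] by simp
    then show ?thesis
      by (metis power_add power_mult)
  qed
  also have "\<dots> \<le> M * ((real p + 1) * energy alpha p x v / alpha)"
    using assms power_le_energy[OF assms(2), of x p v] zero_le_even_power[of "p + 1" x]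
    by (intro mult_mono) auto
  also have "v^2 \<le> 2 * energy alpha p x v"
    using energy_ge_kinetic assms(1,2) by simp
  finally show ?thesis
    using assms(2) by (simp add: field_simps)
qed

lemma quadratic_dissipation_le:
  fixes w y b \<delta> mu alpha :: real
  assumes "0 < alpha" "0 \<le> mu" "0 \<le> \<delta>" "w \<le> mu / 4" "\<delta> * mu \<le> alpha / 2"
  shows "- mu * b^2 + w * b^2 - \<delta> * mu * (y * b) - \<delta> * alpha * y^2
    \<le> - (mu / 2) * b^2 - (\<delta> * alpha / 2) * y^2"
proof -
  have "0 \<le> \<delta> / (2 * alpha) * (alpha * y + mu * b)^2"
    using assms(1,3) by simp
  then have "- (\<delta> * mu * (y * b)) \<le> \<delta> * alpha / 2 * y^2 + (\<delta> * mu) * mu / (2 * alpha) * b^2"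
    using assms(1) by (simp add: power2_eq_square field_simps)
  moreover have "(\<delta> * mu) * mu / (2 * alpha) \<le> (alpha / 2) * mu / (2 * alpha)"
    using assms by (intro divide_right_mono mult_right_mono) auto
  then have "(\<delta> * mu) * mu / (2 * alpha) * b^2 \<le> mu / 4 * b^2"
    using assms(1) by (intro mult_right_mono) auto
  moreover have "w * b^2 \<le> mu / 4 * b^2"
    using assms(4) by (intro mult_right_mono) auto
  moreover have "- mu * b^2 + w * b^2 - \<delta> * mu * (y * b) - \<delta> * alpha * y^2
      = - (mu / 2) * b^2 - (\<delta> * alpha / 2) * y^2 + (w * b^2 - mu / 4 * b^2)
        + (- (\<delta> * mu * (y * b)) - \<delta> * alpha / 2 * y^2 - mu / 4 * b^2)"
    by (simp add: field_simps)
  ultimately show ?thesis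
    by linarith
qed

lemma powr_one_plus_le:
  fixes A a \<theta> :: real
  assumes "0 \<le> A" "A \<le> a" "0 \<le> \<theta>"
  shows "A powr (1 + \<theta>) \<le> a powr \<theta> * A"
proof (cases "A = 0")
  case False
  then have "A powr (1 + \<theta>) = A powr \<theta> * A"
    using assms(1) by (simp add: powr_add)
  also have "\<dots> \<le> a powr \<theta> * A"
    using assms by (intro mult_right_mono powr_mono2) auto
  finally show ?thesis .
qed simp

locale damped_solution =
  fixes mu alpha :: real and p :: nat and x v :: "real \<Rightarrow> real"
  assumes odd_p: "odd p" and p_gt_1: "1 < p" and mu_pos: "0 < mu" and alpha_pos: "0 < alpha"
    and continuous_x: "continuous_on {0..} x" and continuous_v: "continuous_on {0..} v"
    and deriv_x: "\<And>t. 0 < t \<Longrightarrow> (x has_real_derivative v t) (at t)"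
    and deriv_v: "\<And>t. 0 < t \<Longrightarrow> (v has_real_derivative - mu * v t - alpha * x t ^ p) (at t)"
begin

abbreviation E :: "real \<Rightarrow> real" where
  "E t \<equiv> energy alpha p (x t) (v t)"

lemma energy_le_initial:
  assumes "0 \<le> t"
  shows "E t \<le> E 0"
proof (rule energy_antimono[OF assms less_imp_le[OF mu_pos]])
  show "continuous_on {0..t} x" "continuous_on {0..t} v"
    by (auto intro: continuous_on_subset[OF continuous_x] continuous_on_subset[OF continuous_v])
  show "(x has_real_derivative v s) (at s)" if "0 < s" for s
    using deriv_x[OF that] .
  show "(v has_real_derivative - mu * v s - alpha * x s ^ p) (at s)" if "0 < s" for s
    using deriv_v[OF that] .
qed

definition M :: real where
  "M = max 1 ((real p + 1) * E 0 / alpha)"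

lemma M_ge_1: "1 \<le> M"
  by (simp add: M_def)

lemma power_pred_le_M:
  assumes "0 \<le> t"
  shows "x t ^ (p - 1) \<le> M"
proof -
  have "x t ^ (p - 1) = \<bar>x t\<bar> ^ (p - 1)"
    using odd_p p_gt_1 by (simp add: power_even_abs)
  also have "\<dots> \<le> M"
  proof (cases "\<bar>x t\<bar> \<le> 1")
    case True
    then show ?thesis
      by (simp add: M_def power_le_one le_max_iff_disj)
  next
    case False
    have "\<bar>x t\<bar> ^ (p - 1) \<le> \<bar>x t\<bar> ^ (p + 1)"
      using False by (intro power_increasing) auto
    also have "\<dots> = x t ^ (p + 1)"
      using odd_p by (intro power_even_abs) simp
    also have "\<dots> \<le> (real p + 1) * E t / alpha"
      by (rule power_le_energy[OF alpha_pos])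
    also have "\<dots> \<le> (real p + 1) * E 0 / alpha"
      using energy_le_initial[OF assms] alpha_pos by (intro divide_right_mono mult_left_mono) auto
    finally show ?thesis
      by (simp add: M_def)
  qed
  finally show ?thesis .
qed

definition \<delta> :: real where
  "\<delta> = min (1 / (2 * (M * (real p + 1) / (2 * alpha) + 1))) (min (mu / (4 * p * M)) (alpha / (2 * mu)))"

lemma \<delta>_pos: "0 < \<delta>"
  using mu_pos alpha_pos p_gt_1 M_ge_1 by (simp add: \<delta>_def add_pos_nonneg)

lemma \<delta>_le:
  shows "\<delta> * (M * (real p + 1) / (2 * alpha) + 1) \<le> 1 / 2"
    and "\<delta> * p * M \<le> mu / 4"
    and "\<delta> * mu \<le> alpha / 2"
proof -
  define c where "c = M * (real p + 1) / (2 * alpha) + 1"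
  have "0 < c"
    using alpha_pos M_ge_1 by (simp add: c_def add_pos_nonneg)
  have "\<delta> * c \<le> 1 / (2 * c) * c"
    using \<open>0 < c\<close> by (intro mult_right_mono) (auto simp: \<delta>_def c_def)
  also have "\<dots> = 1 / 2"
    using \<open>0 < c\<close> by simp
  finally show "\<delta> * (M * (real p + 1) / (2 * alpha) + 1) \<le> 1 / 2"
    by (simp only: c_def)
  have "\<delta> \<le> mu / (4 * p * M)"
    by (simp add: \<delta>_def)
  moreover have "0 < real p * M"
    using p_gt_1 M_ge_1 by simp
  ultimately show "\<delta> * p * M \<le> mu / 4"
    by (simp add: field_simps)
  have "\<delta> \<le> alpha / (2 * mu)"
    by (simp add: \<delta>_def)
  then show "\<delta> * mu \<le> alpha / 2"
    using mu_pos by (simp add: field_simps)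
qed

text \<open>The correction term \<open>\<delta> x^p v\<close> makes the dissipation control \<open>x^(2p)\<close> as well as \<open>v^2\<close>.\<close>
definition lyapunov :: "real \<Rightarrow> real" where
  "lyapunov t = E t + \<delta> * (x t ^ p * v t)"

definition lyapunov_deriv :: "real \<Rightarrow> real" where
  "lyapunov_deriv t = - mu * v t ^ 2 + \<delta> * p * x t ^ (p - 1) * v t ^ 2
     - \<delta> * mu * (x t ^ p * v t) - \<delta> * alpha * (x t ^ p)^2"

lemma continuous_on_lyapunov: "continuous_on {0..t} lyapunov"
  unfolding lyapunov_def energy_def
  by (intro continuous_intros continuous_on_subset[OF continuous_x] continuous_on_subset[OF continuous_v])
    auto

lemma abs_lyapunov_minus_energy_le:
  assumes "0 \<le> t"
  shows "\<bar>lyapunov t - E t\<bar> \<le> E t / 2"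
proof -
  have "\<bar>lyapunov t - E t\<bar> = \<delta> * \<bar>x t ^ p * v t\<bar>"
    using \<delta>_pos by (simp add: lyapunov_def abs_mult)
  also have "\<dots> \<le> \<delta> * ((M * (real p + 1) / (2 * alpha) + 1) * E t)"
    using \<delta>_pos power_pred_le_M[OF assms] odd_p alpha_pos
    by (intro mult_left_mono abs_power_mult_le_energy) (auto simp: M_def)
  also have "\<dots> \<le> E t / 2"
    using mult_right_mono[OF \<delta>_le(1) energy_nonneg[OF odd_p, of alpha "x t" "v t"]] alpha_pos
    by (simp add: mult.assoc)
  finally show ?thesis .
qed

lemma energy_le_twice_lyapunov:
  assumes "0 \<le> t"
  shows "E t \<le> 2 * lyapunov t"
  using abs_le_D2[OF abs_lyapunov_minus_energy_le[OF assms]] by simp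

lemma lyapunov_nonneg:
  assumes "0 \<le> t"
  shows "0 \<le> lyapunov t"
  using energy_le_twice_lyapunov[OF assms] energy_nonneg[OF odd_p less_imp_le[OF alpha_pos], of "x t" "v t"]
  by linarith

lemma lyapunov_le:
  assumes "0 \<le> t"
  shows "lyapunov t \<le> 2 * (1 + alpha) * (v t ^ 2 + \<bar>x t\<bar> ^ (p + 1))"
proof -
  have "\<bar>x t\<bar> ^ (p + 1) = x t ^ (p + 1)"
    using odd_p by (intro power_even_abs) simp
  then have "E t \<le> (1 + alpha) * (v t ^ 2 + \<bar>x t\<bar> ^ (p + 1))"
    using alpha_pos zero_le_even_power[of "p + 1" "x t"] odd_p
    by (simp add: energy_def field_simps)
  moreover have "0 \<le> E t"
    using energy_nonneg odd_p alpha_pos by simp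
  ultimately show ?thesis
    using abs_le_D1[OF abs_lyapunov_minus_energy_le[OF assms]] by linarith
qed

lemma abs_power_le_lyapunov:
  assumes "0 \<le> t"
  shows "\<bar>x t\<bar> ^ (p + 1) \<le> 2 * (real p + 1) / alpha * lyapunov t"
proof -
  have "\<bar>x t\<bar> ^ (p + 1) = x t ^ (p + 1)"
    using odd_p by (intro power_even_abs) simp
  also have "\<dots> \<le> (real p + 1) * E t / alpha"
    by (rule power_le_energy[OF alpha_pos])
  also have "\<dots> \<le> (real p + 1) * (2 * lyapunov t) / alpha"
    using energy_le_twice_lyapunov[OF assms] alpha_pos by (intro divide_right_mono mult_left_mono) auto
  also have "\<dots> = 2 * (real p + 1) / alpha * lyapunov t"
    by simp
  finally show ?thesis .
qed

lemma has_real_derivative_lyapunov: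
  assumes "0 < t"
  shows "(lyapunov has_real_derivative lyapunov_deriv t) (at t)"
proof -
  have "(lyapunov has_real_derivative v t * (- mu * v t - alpha * x t ^ p + alpha * x t ^ p)
      + \<delta> * (x t ^ p * (- mu * v t - alpha * x t ^ p) + p * (v t * x t ^ (p - Suc 0)) * v t)) (at t)"
    unfolding lyapunov_def[abs_def]
    by (intro DERIV_add DERIV_cmult DERIV_mult' has_real_derivative_energy
        DERIV_power[OF deriv_x[OF assms]] deriv_x[OF assms] deriv_v[OF assms])
  then show ?thesis
    by (rule DERIV_cong) (simp add: lyapunov_deriv_def power2_eq_square algebra_simps)
qed

lemma lyapunov_deriv_le:
  assumes "0 < t"
  shows "lyapunov_deriv t \<le> - (mu / 2) * v t ^ 2 - (\<delta> * alpha / 2) * (x t ^ p)^2"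
proof -
  have "\<delta> * p * x t ^ (p - 1) \<le> \<delta> * p * M"
    using \<delta>_pos power_pred_le_M assms by (intro mult_left_mono) auto
  then show ?thesis
    unfolding lyapunov_deriv_def
    using quadratic_dissipation_le[OF alpha_pos less_imp_le[OF mu_pos] less_imp_le[OF \<delta>_pos] _ \<delta>_le(3)]
      \<delta>_le(2) by simp
qed

definition \<theta> :: real where
  "\<theta> = (real p - 1) / (real p + 1)"

lemma lyapunov_powr_le: "\<exists>K>0. \<forall>t\<ge>0. lyapunov t powr (1 + \<theta>) \<le> K * (v t ^ 2 + (x t ^ p)^2)"
proof (intro exI conjI allI impI)
  have "0 \<le> \<theta>"
    using p_gt_1 by (simp add: \<theta>_def)
  define N where "N = max 1 ((2 * E 0) powr \<theta>)"
  define K where "K = (2 * (1 + alpha)) powr (1 + \<theta>) * 2 powr (1 + \<theta>) * N"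
  show "0 < K"
    using alpha_pos by (simp add: K_def N_def)
  fix t :: real assume "0 \<le> t"
  let ?A = "v t ^ 2" and ?B = "\<bar>x t\<bar> ^ (p + 1)"
  have "?A \<le> 2 * E 0"
    using energy_ge_kinetic[OF odd_p less_imp_le[OF alpha_pos], where x = "x t" and v = "v t"]
      energy_le_initial[OF \<open>0 \<le> t\<close>]
    by simp
  then have "?A powr (1 + \<theta>) \<le> (2 * E 0) powr \<theta> * ?A"
    using \<open>0 \<le> \<theta>\<close> by (intro powr_one_plus_le) auto
  also have "\<dots> \<le> N * ?A"
    by (intro mult_right_mono) (auto simp: N_def)
  finally have "?A powr (1 + \<theta>) + ?B powr (1 + \<theta>) \<le> N * (?A + (x t ^ p)^2)"
    using abs_power_Suc_powr[of p "x t"] p_gt_1 mult_right_mono[of 1 N "(x t ^ p)^2"]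
    by (simp add: \<theta>_def N_def distrib_left)
  have "lyapunov t powr (1 + \<theta>) \<le> (2 * (1 + alpha) * (?A + ?B)) powr (1 + \<theta>)"
    using lyapunov_nonneg lyapunov_le \<open>0 \<le> t\<close> \<open>0 \<le> \<theta>\<close> by (intro powr_mono2) auto
  also have "\<dots> = (2 * (1 + alpha)) powr (1 + \<theta>) * (?A + ?B) powr (1 + \<theta>)"
    by (rule powr_mult)
  also have "\<dots> \<le> (2 * (1 + alpha)) powr (1 + \<theta>) * (2 powr (1 + \<theta>) * (?A powr (1 + \<theta>) + ?B powr (1 + \<theta>)))"
    using \<open>0 \<le> \<theta>\<close> by (intro mult_left_mono add_powr_le) auto
  also have "\<dots> \<le> (2 * (1 + alpha)) powr (1 + \<theta>) * (2 powr (1 + \<theta>) * (N * (?A + (x t ^ p)^2)))"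
    using \<open>?A powr (1 + \<theta>) + ?B powr (1 + \<theta>) \<le> N * (?A + (x t ^ p)^2)\<close>
    by (intro mult_left_mono) auto
  finally show "lyapunov t powr (1 + \<theta>) \<le> K * (?A + (x t ^ p)^2)"
    by (simp add: K_def mult.assoc)
qed

lemma lyapunov_dissipation: "\<exists>\<kappa>>0. \<forall>t>0. lyapunov_deriv t \<le> - \<kappa> * lyapunov t powr (1 + \<theta>)"
proof -
  obtain K where "0 < K" and K: "\<And>t. 0 \<le> t \<Longrightarrow> lyapunov t powr (1 + \<theta>) \<le> K * (v t ^ 2 + (x t ^ p)^2)"
    using lyapunov_powr_le by blast
  define m where "m = min (mu / 2) (\<delta> * alpha / 2)"
  have "0 < m"
    using mu_pos \<delta>_pos alpha_pos by (simp add: m_def)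
  have "lyapunov_deriv t \<le> - (m / K) * lyapunov t powr (1 + \<theta>)" if "0 < t" for t
  proof -
    have "- (mu / 2) * v t ^ 2 \<le> - m * v t ^ 2" "- (\<delta> * alpha / 2) * (x t ^ p)^2 \<le> - m * (x t ^ p)^2"
      by (intro mult_right_mono; simp add: m_def)+
    then have "lyapunov_deriv t \<le> - m * v t ^ 2 + - m * (x t ^ p)^2"
      using lyapunov_deriv_le[OF that] by linarith
    then have "lyapunov_deriv t \<le> - m * (v t ^ 2 + (x t ^ p)^2)"
      by (simp add: distrib_left)
    also have "\<dots> \<le> - (m / K) * lyapunov t powr (1 + \<theta>)"
    proof -
      have "m * lyapunov t powr (1 + \<theta>) \<le> m * (K * (v t ^ 2 + (x t ^ p)^2))"
        using K[of t] that \<open>0 < m\<close> by (intro mult_left_mono) auto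
      then show ?thesis
        using \<open>0 < K\<close> by (simp add: field_simps)
    qed
    finally show ?thesis .
  qed
  then show ?thesis
    using \<open>0 < m\<close> \<open>0 < K\<close> by (intro exI[of _ "m / K"]) auto
qed

lemma decay: "\<exists>C>0. \<forall>t>0. \<bar>x t\<bar> \<le> C * t powr (- 1 / (real p - 1))"
proof -
  obtain \<kappa> where "0 < \<kappa>" and \<kappa>: "\<And>t. 0 < t \<Longrightarrow> lyapunov_deriv t \<le> - \<kappa> * lyapunov t powr (1 + \<theta>)"
    using lyapunov_dissipation by blast
  define q where "q = (real p + 1) / (real p - 1)"
  have "0 < q" "1 / q = \<theta>" and q_eq: "q = real (p + 1) * (1 / (real p - 1))"
    using p_gt_1 by (simp_all add: q_def \<theta>_def)
  define A where "A = 2 * (real p + 1) / alpha"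
  define C where "C = A powr (1 / (p + 1)) * (\<kappa> / q) powr (- (1 / (real p - 1)))"
  have "0 < C"
    using alpha_pos \<open>0 < \<kappa>\<close> \<open>0 < q\<close> by (simp add: C_def A_def)
  have "\<bar>x t\<bar> \<le> C * t powr (- 1 / (real p - 1))" if "0 < t" for t
  proof -
    have "lyapunov t \<le> (\<kappa> * t / q) powr (- q)"
    proof (rule powr_decay_of_deriv_le[OF that \<open>0 < \<kappa>\<close> \<open>0 < q\<close>])
    qed (use continuous_on_lyapunov lyapunov_nonneg has_real_derivative_lyapunov \<kappa> \<open>1 / q = \<theta>\<close> in auto)
    have "\<bar>x t\<bar> ^ (p + 1) \<le> A * lyapunov t"
      using abs_power_le_lyapunov[of t] that by (simp add: A_def)
    also have "\<dots> \<le> A * (\<kappa> * t / q) powr (- q)"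
      using \<open>lyapunov t \<le> (\<kappa> * t / q) powr (- q)\<close> alpha_pos
      by (intro mult_left_mono) (auto simp: A_def)
    also have "(\<kappa> * t / q) powr (- q) = (\<kappa> / q * t) powr (- (real (p + 1) * (1 / (real p - 1))))"
      unfolding q_eq[symmetric] by simp
    finally have "\<bar>x t\<bar> ^ (p + 1) \<le> A * (\<kappa> / q * t) powr (- (real (p + 1) * (1 / (real p - 1))))" .
    then have "\<bar>x t\<bar> \<le> A powr (1 / (p + 1)) * (\<kappa> / q * t) powr (- (1 / (real p - 1)))"
      using \<open>0 < \<kappa>\<close> \<open>0 < q\<close> that alpha_pos by (intro abs_le_of_power_le_powr) (auto simp: A_def)
    also have "\<dots> = C * t powr (- (1 / (real p - 1)))"
      by (simp only: C_def powr_mult mult.assoc)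
    finally show ?thesis
      by simp
  qed
  then show ?thesis
    using \<open>0 < C\<close> by blast
qed

end

theorem theorem1:
  fixes p :: nat and mu alpha x0 x1 :: real
  assumes "odd p" and "p \<ge> 3" and "mu \<ge> 0" and "alpha > 0"
  shows "\<exists>x. ivp_solution mu alpha p x0 x1 x \<and>
           (\<forall>y. ivp_solution mu alpha p x0 x1 y \<longrightarrow> (\<forall>t\<ge>0. y t = x t)) \<and>
           (mu > 0 \<longrightarrow> (\<exists>C>0. \<forall>t>0. \<bar>x t\<bar> \<le> C * t powr (- 1 / (real p - 1))))"
proof -
  obtain x where sol: "ivp_solution mu alpha p x0 x1 x"
    using ivp_solution_exists assms by blast
  moreover have "\<forall>y. ivp_solution mu alpha p x0 x1 y \<longrightarrow> (\<forall>t\<ge>0. y t = x t)"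
    using ivp_solution_unique[OF assms(3,4) sol] by blast
  moreover have "\<exists>C>0. \<forall>t>0. \<bar>x t\<bar> \<le> C * t powr (- 1 / (real p - 1))" if "0 < mu"
  proof -
    obtain v where "continuous_on {0..} x" "continuous_on {0..} v"
      and "\<And>t. 0 < t \<Longrightarrow> (x has_real_derivative v t) (at t)"
      and "\<And>t. 0 < t \<Longrightarrow> (v has_real_derivative - mu * v t - alpha * x t ^ p) (at t)"
      using ivp_solutionE[OF sol] by metis
    then interpret damped_solution mu alpha p x v
      using assms that by unfold_locales auto
    show ?thesis
      by (rule decay)
  qed
  ultimately show ?thesis
    by blast
qed

end
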